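(* Let $(X,T)$ be a CAM $G$-system and let $H$ be a finite index normal subgroup of $G$, with left cosets $g_1H,\dots,g_mH$. Suppose $Y\subseteq X$ is a compact $H$-invariant subset containing a point whose $H$-orbit is infinite. Then $\bigcup_{i=1}^m T_{g_i}(Y)=X$, and the points of $Y$ with finite $H$-orbit are dense in $Y$.
   Context: Let $G$ be a countable discrete group. A topological $G$-system $(X,T)$ consists of a compact metric space $X$ and an action $T\colon G\to\mathrm{Homeo}(X)$, $g\mapsto T_g$. The system is topologically transitive if for all nonempty open $U,V\subseteq X$ there is $g\in G$ with $T_gU\cap V\neq\emptyset$; the action is faithful if $T_g=\mathrm{id}_X$ only when $g$ is the identity. A point is periodic if its $G$-orbit is finite. The system is chaotic almost minimal (CAM) if: (1) it is topologically transitive and the action is faithful; (2) the periodic points are dense in $X$; (3) every proper closed $T$-invariant subset of $X$ is finite. *)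

theory Defs
  imports "HOL-Analysis.Analysis" "HOL-Algebra.Coset"
begin

definition G_system :: "('g, 'b) monoid_scheme \<Rightarrow> ('x::metric_space) set \<Rightarrow> ('g \<Rightarrow> 'x \<Rightarrow> 'x) \<Rightarrow> bool" where
  "G_system G X T \<longleftrightarrow> group G \<and> countable (carrier G) \<and> compact X \<and>
     (\<forall>g\<in>carrier G. homeomorphism X X (T g) (T (inv\<^bsub>G\<^esub> g))) \<and>
     (\<forall>x\<in>X. T \<one>\<^bsub>G\<^esub> x = x) \<and>
     (\<forall>g\<in>carrier G. \<forall>h\<in>carrier G. \<forall>x\<in>X. T (g \<otimes>\<^bsub>G\<^esub> h) x = T g (T h x))"

definition orbit :: "('g \<Rightarrow> 'x \<Rightarrow> 'x) \<Rightarrow> 'g set \<Rightarrow> 'x \<Rightarrow> 'x set" where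
  "orbit T A x = (\<lambda>g. T g x) ` A"

definition top_transitive :: "('g, 'b) monoid_scheme \<Rightarrow> ('x::metric_space) set \<Rightarrow> ('g \<Rightarrow> 'x \<Rightarrow> 'x) \<Rightarrow> bool" where
  "top_transitive G X T \<longleftrightarrow> (\<forall>U V. openin (top_of_set X) U \<and> U \<noteq> {} \<and>
      openin (top_of_set X) V \<and> V \<noteq> {} \<longrightarrow> (\<exists>g\<in>carrier G. T g ` U \<inter> V \<noteq> {}))"

definition faithful :: "('g, 'b) monoid_scheme \<Rightarrow> 'x set \<Rightarrow> ('g \<Rightarrow> 'x \<Rightarrow> 'x) \<Rightarrow> bool" where
  "faithful G X T \<longleftrightarrow> (\<forall>g\<in>carrier G. (\<forall>x\<in>X. T g x = x) \<longrightarrow> g = \<one>\<^bsub>G\<^esub>)"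

definition periodic_points :: "('g, 'b) monoid_scheme \<Rightarrow> 'x set \<Rightarrow> ('g \<Rightarrow> 'x \<Rightarrow> 'x) \<Rightarrow> 'x set" where
  "periodic_points G X T = {x\<in>X. finite (orbit T (carrier G) x)}"

definition invariant :: "'g set \<Rightarrow> ('g \<Rightarrow> 'x \<Rightarrow> 'x) \<Rightarrow> 'x set \<Rightarrow> bool" where
  "invariant A T Z \<longleftrightarrow> (\<forall>g\<in>A. T g ` Z \<subseteq> Z)"

definition CAM :: "('g, 'b) monoid_scheme \<Rightarrow> ('x::metric_space) set \<Rightarrow> ('g \<Rightarrow> 'x \<Rightarrow> 'x) \<Rightarrow> bool" where
  "CAM G X T \<longleftrightarrow> G_system G X T \<and> top_transitive G X T \<and> faithful G X T \<and>
     X \<subseteq> closure (periodic_points G X T) \<and>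
     (\<forall>Z. closed Z \<and> Z \<subseteq> X \<and> Z \<noteq> X \<and> invariant (carrier G) T Z \<longrightarrow> finite Z)"

end

theory Submission
  imports Defs
begin

text \<open>
  The union \<open>Z\<close> of the finitely many translates \<open>T\<^sub>r Y\<close> is compact and \<open>G\<close>-invariant, because
  \<open>g r = r' h\<close> with \<open>r'\<close> a coset representative and \<open>h \<in> H\<close>; as \<open>Y\<close> is infinite, so is \<open>Z\<close>,
  hence \<open>Z = X\<close> by almost minimality. Applying this to the closure \<open>C\<close> of an infinite \<open>H\<close>-orbit
  in \<open>Y\<close>, the space \<open>X\<close> is a finite union of the closed sets \<open>T\<^sub>r C\<close>, so one of them and hence \<open>C\<close>
  itself has nonempty interior. That interior meets the dense orbit, and translating it back by
  an element of \<open>H\<close> shows that the orbit's base point is an interior point of \<open>C \<subseteq> Y\<close>;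
  density of periodic points in \<open>X\<close> then yields periodic points of \<open>Y\<close> arbitrarily close to it.
\<close>

lemma finite_closedin_cover_interior_of_nonempty:
  assumes "finite I" and "\<And>i. i \<in> I \<Longrightarrow> closedin X (F i)"
    and "openin X U" and "U \<noteq> {}" and "U \<subseteq> (\<Union>i\<in>I. F i)"
  shows "\<exists>i\<in>I. X interior_of F i \<noteq> {}"
  using assms
proof (induction I arbitrary: U rule: finite_induct)
  case empty
  then show ?case by auto
next
  case (insert a I)
  show ?case
  proof (cases "U \<subseteq> (\<Union>i\<in>I. F i)")
    case True
    then show ?thesis using insert by blast
  next
    case False
    have "openin X (U - (\<Union>i\<in>I. F i))"
      using insert.hyps insert.prems by (intro openin_diff closedin_Union) auto
    moreover have "U - (\<Union>i\<in>I. F i) \<subseteq> F a" using insert.prems by auto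
    ultimately have "X interior_of F a \<noteq> {}"
      using False by (metis Diff_eq_empty_iff interior_of_maximal subset_empty)
    then show ?thesis by blast
  qed
qed

lemma (in group) transversal_decomposition:
  assumes "subgroup H G" and "{g <# H | g. g \<in> carrier G} \<subseteq> (\<lambda>r. r <# H) ` R"
    and "g \<in> carrier G"
  shows "\<exists>r\<in>R. \<exists>h\<in>H. g = r \<otimes> h"
proof -
  obtain r where "r \<in> R" and coset: "g <# H = r <# H" using assms(2,3) by blast
  have "g \<in> g <# H"
    using assms(3) subgroup.one_closed[OF assms(1)] unfolding l_coset_def by force
  then have "g \<in> r <# H" by (simp only: coset)
  then obtain h where "h \<in> H" "g = r \<otimes> h" unfolding l_coset_def by blast
  then show ?thesis using \<open>r \<in> R\<close> by blast
qed

lemma orbit_mono: "A \<subseteq> B \<Longrightarrow> orbit T A x \<subseteq> orbit T B x"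
  unfolding orbit_def by blast

locale topological_G_system =
  fixes G :: "('g, 'b) monoid_scheme" and X :: "('x::metric_space) set"
    and T :: "'g \<Rightarrow> 'x \<Rightarrow> 'x"
  assumes G_system: "G_system G X T"
begin

lemma group: "group G"
  using G_system unfolding G_system_def by blast

lemma homeomorphism_action: "g \<in> carrier G \<Longrightarrow> homeomorphism X X (T g) (T (inv\<^bsub>G\<^esub> g))"
  using G_system unfolding G_system_def by blast

lemma action_mult:
  "\<lbrakk>g \<in> carrier G; h \<in> carrier G; x \<in> X\<rbrakk> \<Longrightarrow> T (g \<otimes>\<^bsub>G\<^esub> h) x = T g (T h x)"
  using G_system unfolding G_system_def by blast

lemma action_closed: "\<lbrakk>g \<in> carrier G; x \<in> X\<rbrakk> \<Longrightarrow> T g x \<in> X"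
  using homeomorphism_action unfolding homeomorphism_def by blast

lemma action_inv: "\<lbrakk>g \<in> carrier G; x \<in> X\<rbrakk> \<Longrightarrow> T (inv\<^bsub>G\<^esub> g) (T g x) = x"
  using homeomorphism_action unfolding homeomorphism_def by blast

lemma continuous_on_action: "g \<in> carrier G \<Longrightarrow> continuous_on X (T g)"
  using homeomorphism_action unfolding homeomorphism_def by blast

lemma inj_on_action: "g \<in> carrier G \<Longrightarrow> inj_on (T g) X"
  by (metis action_inv inj_on_inverseI)

lemma compact_image_action: "\<lbrakk>g \<in> carrier G; compact K; K \<subseteq> X\<rbrakk> \<Longrightarrow> compact (T g ` K)"
  by (rule compact_continuous_image[OF continuous_on_subset[OF continuous_on_action]])

lemma openin_image_action:
  "\<lbrakk>g \<in> carrier G; openin (top_of_set X) U\<rbrakk> \<Longrightarrow> openin (top_of_set X) (T g ` U)"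
  by (rule homeomorphism_imp_open_map[OF homeomorphism_action])

lemma compact_space: "compact X"
  using G_system unfolding G_system_def by blast

lemma closed_space: "closed X"
  using compact_space by (rule compact_imp_closed)

lemma invariant_closure:
  assumes "A \<subseteq> carrier G" and "S \<subseteq> X" and "invariant A T S"
  shows "invariant A T (closure S)"
  unfolding invariant_def
proof
  fix g assume "g \<in> A"
  then have g: "g \<in> carrier G" using assms(1) by blast
  have "closure S \<subseteq> X" using assms(2) closed_space by (rule closure_minimal)
  then have "continuous_on (closure S) (T g)"
    by (rule continuous_on_subset[OF continuous_on_action[OF g]])
  moreover have "T g ` S \<subseteq> closure S"
    using \<open>g \<in> A\<close> assms(3) closure_subset unfolding invariant_def by blast
  ultimately show "T g ` closure S \<subseteq> closure S" by (rule image_closure_subset[OF _ closed_closure])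
qed

lemma invariant_orbit:
  assumes "subgroup H G" and "x \<in> X"
  shows "invariant H T (orbit T H x)"
  unfolding invariant_def
proof (intro ballI subsetI)
  fix g z assume g: "g \<in> H" and "z \<in> T g ` orbit T H x"
  then obtain k where k: "k \<in> H" and "z = T g (T k x)" unfolding orbit_def by blast
  then have "z = T (g \<otimes>\<^bsub>G\<^esub> k) x"
    using g by (simp add: action_mult assms(2) subgroup.mem_carrier[OF assms(1)])
  then show "z \<in> orbit T H x"
    unfolding orbit_def using g k subgroup.m_closed[OF assms(1)] by blast
qed

lemma interior_of_image_action_nonempty:
  assumes g: "g \<in> carrier G" and "C \<subseteq> X"
    and "top_of_set X interior_of (T g ` C) \<noteq> {}"
  shows "top_of_set X interior_of C \<noteq> {}"
proof -
  let ?W = "top_of_set X interior_of (T g ` C)"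
  let ?g' = "inv\<^bsub>G\<^esub> g"
  have g': "?g' \<in> carrier G" using group.inv_closed[OF group g] .
  have "(\<lambda>c. T ?g' (T g c)) ` C = (\<lambda>c. c) ` C"
    using assms(2) by (intro image_cong) (auto simp: action_inv[OF g])
  then have "T ?g' ` T g ` C = C" by (simp add: image_image)
  then have "T ?g' ` ?W \<subseteq> C" using image_mono[OF interior_of_subset] by metis
  moreover have "openin (top_of_set X) (T ?g' ` ?W)"
    using openin_image_action[OF g' openin_interior_of] .
  ultimately have "T ?g' ` ?W \<subseteq> top_of_set X interior_of C" by (rule interior_of_maximal)
  then show ?thesis using assms(3) by auto
qed

lemma orbit_closure_interior_of:
  assumes H: "subgroup H G" and x: "x \<in> X"
    and "top_of_set X interior_of closure (orbit T H x) \<noteq> {}"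
  shows "x \<in> top_of_set X interior_of closure (orbit T H x)"
proof -
  let ?C = "closure (orbit T H x)"
  let ?V = "top_of_set X interior_of ?C"
  have HG: "H \<subseteq> carrier G" using H subgroup.subset by blast
  have orbX: "orbit T H x \<subseteq> X" unfolding orbit_def using HG x action_closed by blast
  obtain U where "open U" and V: "?V = X \<inter> U"
    by (metis openin_interior_of openin_open)
  have "U \<inter> ?C \<noteq> {}" using assms(3) V interior_of_subset[of _ ?C] by blast
  then have "U \<inter> orbit T H x \<noteq> {}" using open_Int_closure_eq_empty[OF \<open>open U\<close>] by simp
  then obtain h where h: "h \<in> H" and "T h x \<in> U" unfolding orbit_def by blast
  then have hx: "T h x \<in> ?V" using V HG x action_closed by blast
  have h': "inv\<^bsub>G\<^esub> h \<in> H" using subgroup.m_inv_closed[OF H h] .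
  have "T (inv\<^bsub>G\<^esub> h) ` ?V \<subseteq> T (inv\<^bsub>G\<^esub> h) ` ?C"
    by (rule image_mono[OF interior_of_subset])
  also have "\<dots> \<subseteq> ?C"
    using invariant_closure[OF HG orbX invariant_orbit[OF H x]] h' unfolding invariant_def by blast
  finally have "T (inv\<^bsub>G\<^esub> h) ` ?V \<subseteq> ?C" .
  moreover have "openin (top_of_set X) (T (inv\<^bsub>G\<^esub> h) ` ?V)"
    using h' HG by (intro openin_image_action openin_interior_of) blast
  ultimately have "T (inv\<^bsub>G\<^esub> h) ` ?V \<subseteq> ?V" by (rule interior_of_maximal)
  moreover have "x \<in> T (inv\<^bsub>G\<^esub> h) ` ?V"
    using hx action_inv[OF subsetD[OF HG h] x] by (rule rev_image_eqI[OF _ sym])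
  ultimately show ?thesis by blast
qed

end

locale CAM_system = topological_G_system +
  assumes CAM: "CAM G X T"
begin

lemma periodic_points_dense: "X \<subseteq> closure (periodic_points G X T)"
  using CAM unfolding CAM_def by (elim conjE)

lemma invariant_closed_infinite_eq:
  assumes "closed Z" and "Z \<subseteq> X" and "invariant (carrier G) T Z" and "infinite Z"
  shows "Z = X"
proof -
  have "\<forall>Z. closed Z \<and> Z \<subseteq> X \<and> Z \<noteq> X \<and> invariant (carrier G) T Z \<longrightarrow> finite Z"
    using CAM unfolding CAM_def by (elim conjE)
  then show ?thesis using assms by blast
qed

lemma translates_cover:
  assumes H: "subgroup H G" and "finite R" and "R \<subseteq> carrier G"
    and transversal: "{g <#\<^bsub>G\<^esub> H | g. g \<in> carrier G} \<subseteq> (\<lambda>r. r <#\<^bsub>G\<^esub> H) ` R"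
    and "compact Y" and "Y \<subseteq> X" and "invariant H T Y" and "infinite Y"
  shows "(\<Union>r\<in>R. T r ` Y) = X"
proof (rule invariant_closed_infinite_eq)
  let ?Z = "\<Union>r\<in>R. T r ` Y"
  have "compact ?Z"
    using assms(2,3,5,6) compact_image_action by (intro compact_UN) auto
  then show "closed ?Z" by (rule compact_imp_closed)
  show "?Z \<subseteq> X" using assms(3,6) action_closed by blast
  show "invariant (carrier G) T ?Z"
    unfolding invariant_def
  proof (intro ballI subsetI)
    fix g z assume g: "g \<in> carrier G" and "z \<in> T g ` ?Z"
    then obtain r y where r: "r \<in> R" and y: "y \<in> Y" and z: "z = T g (T r y)" by blast
    have rG: "r \<in> carrier G" using r assms(3) by blast
    have "g \<otimes>\<^bsub>G\<^esub> r \<in> carrier G" using monoid.m_closed[OF group.is_monoid[OF group] g rG] .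
    then obtain r' h where r': "r' \<in> R" and h: "h \<in> H" and gr: "g \<otimes>\<^bsub>G\<^esub> r = r' \<otimes>\<^bsub>G\<^esub> h"
      using group.transversal_decomposition[OF group H transversal] by blast
    have "y \<in> X" using y assms(6) by blast
    have "r' \<in> carrier G" "h \<in> carrier G"
      using r' h assms(3) subgroup.mem_carrier[OF H] by auto
    have "z = T (g \<otimes>\<^bsub>G\<^esub> r) y" using z action_mult[OF g rG \<open>y \<in> X\<close>] by simp
    also have "\<dots> = T (r' \<otimes>\<^bsub>G\<^esub> h) y" using gr by simp
    also have "\<dots> = T r' (T h y)" by (rule action_mult) fact+
    finally have "z = T r' (T h y)" .
    moreover have "T h y \<in> Y" using h y assms(7) unfolding invariant_def by blast
    ultimately show "z \<in> ?Z" using UN_I[OF r' imageI] by simp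
  qed
  have "\<one>\<^bsub>G\<^esub> \<in> carrier G" by (rule monoid.one_closed[OF group.is_monoid[OF group]])
  then have "\<one>\<^bsub>G\<^esub> <#\<^bsub>G\<^esub> H \<in> {g <#\<^bsub>G\<^esub> H | g. g \<in> carrier G}" by blast
  then have "\<one>\<^bsub>G\<^esub> <#\<^bsub>G\<^esub> H \<in> (\<lambda>r. r <#\<^bsub>G\<^esub> H) ` R" using transversal ..
  then obtain r where r: "r \<in> R" by blast
  then have "inj_on (T r) Y" using inj_on_subset[OF inj_on_action assms(6)] assms(3) by blast
  then have "infinite (T r ` Y)" using assms(8) finite_imageD by blast
  then show "infinite ?Z" by (rule infinite_super[OF UN_upper[OF r]])
qed

lemma infinite_orbit_interior_of_orbit_closure:
  assumes H: "subgroup H G" and R: "finite R" "R \<subseteq> carrier G"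
    and transversal: "{g <#\<^bsub>G\<^esub> H | g. g \<in> carrier G} \<subseteq> (\<lambda>r. r <#\<^bsub>G\<^esub> H) ` R"
    and "x \<in> X" and "infinite (orbit T H x)"
  shows "x \<in> top_of_set X interior_of closure (orbit T H x)"
proof (rule orbit_closure_interior_of[OF H \<open>x \<in> X\<close>])
  let ?C = "closure (orbit T H x)"
  have HG: "H \<subseteq> carrier G" using H subgroup.subset by blast
  have orbX: "orbit T H x \<subseteq> X" unfolding orbit_def using HG assms(5) action_closed by blast
  then have CX: "?C \<subseteq> X" using closed_space by (rule closure_minimal)
  have "compact ?C"
    using closed_Int_compact[OF closed_closure[of "orbit T H x"] compact_space] Int_absorb2[OF CX]
    by simp
  have cover: "(\<Union>r\<in>R. T r ` ?C) = X"
    using translates_cover[OF H R transversal \<open>compact ?C\<close> CX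
        invariant_closure[OF HG orbX invariant_orbit[OF H assms(5)]]
        infinite_super[OF closure_subset assms(6)]] .
  have "closedin (top_of_set X) (T r ` ?C)" if "r \<in> R" for r
  proof (rule closed_subset)
    show "T r ` ?C \<subseteq> X" using that cover by blast
    show "closed (T r ` ?C)"
      using that R(2) CX \<open>compact ?C\<close> by (intro compact_imp_closed compact_image_action) auto
  qed
  moreover have "openin (top_of_set X) X" by simp
  moreover have "X \<noteq> {}" using assms(5) by blast
  moreover have "X \<subseteq> (\<Union>r\<in>R. T r ` ?C)" using cover by simp
  ultimately obtain r where "r \<in> R" "top_of_set X interior_of (T r ` ?C) \<noteq> {}"
    using finite_closedin_cover_interior_of_nonempty[OF R(1), of "top_of_set X" "\<lambda>r. T r ` ?C" X]
    by blast
  then show "top_of_set X interior_of ?C \<noteq> {}"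
    using R(2) CX interior_of_image_action_nonempty by blast
qed

lemma subset_closure_finite_orbits:
  assumes H: "subgroup H G" and R: "finite R" "R \<subseteq> carrier G"
    and transversal: "{g <#\<^bsub>G\<^esub> H | g. g \<in> carrier G} \<subseteq> (\<lambda>r. r <#\<^bsub>G\<^esub> H) ` R"
    and "compact Y" and "Y \<subseteq> X" and "invariant H T Y"
  shows "Y \<subseteq> closure {y\<in>Y. finite (orbit T H y)}"
proof
  fix y assume "y \<in> Y"
  then have "y \<in> X" using assms(6) by blast
  show "y \<in> closure {y\<in>Y. finite (orbit T H y)}"
  proof (cases "finite (orbit T H y)")
    case True
    with \<open>y \<in> Y\<close> have "y \<in> {y\<in>Y. finite (orbit T H y)}" by simp
    then show ?thesis by (rule closure_subset[THEN subsetD])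
  next
    case False
    let ?V = "top_of_set X interior_of closure (orbit T H y)"
    have "orbit T H y \<subseteq> Y"
      using \<open>y \<in> Y\<close> assms(7) unfolding orbit_def invariant_def by blast
    then have "closure (orbit T H y) \<subseteq> Y"
      by (rule closure_minimal[OF _ compact_imp_closed[OF assms(5)]])
    then have VY: "?V \<subseteq> Y" by (rule order_trans[OF interior_of_subset])
    obtain U where "open U" and V: "?V = X \<inter> U"
      by (metis openin_interior_of openin_open)
    have periodic_in_Y: "U \<inter> periodic_points G X T \<subseteq> {y\<in>Y. finite (orbit T H y)}"
    proof
      fix p assume p: "p \<in> U \<inter> periodic_points G X T"
      then have "p \<in> X" and finite_G_orbit: "finite (orbit T (carrier G) p)"
        unfolding periodic_points_def by auto
      then have "p \<in> Y" using p V VY by blast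
      moreover have "finite (orbit T H p)"
        by (rule finite_subset[OF orbit_mono[OF subgroup.subset[OF H]] finite_G_orbit])
      ultimately show "p \<in> {y\<in>Y. finite (orbit T H y)}" by simp
    qed
    have "y \<in> ?V"
      using infinite_orbit_interior_of_orbit_closure[OF H R transversal \<open>y \<in> X\<close> False] .
    then have "y \<in> U \<inter> closure (periodic_points G X T)"
      using V periodic_points_dense \<open>y \<in> X\<close> by blast
    also have "\<dots> \<subseteq> closure (U \<inter> periodic_points G X T)"
      using \<open>open U\<close> by (rule open_Int_closure_subset)
    also have "\<dots> \<subseteq> closure {y\<in>Y. finite (orbit T H y)}"
      using periodic_in_Y by (rule closure_mono)
    finally show ?thesis .
  qed
qed

end

theorem lemma3p2:
  fixes G :: "('g, 'b) monoid_scheme" and X Y :: "('x::metric_space) set"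
    and T :: "'g \<Rightarrow> 'x \<Rightarrow> 'x" and H R :: "'g set"
  assumes "CAM G X T"
    and "H \<lhd> G"
    and "finite R" and "R \<subseteq> carrier G"
    and "bij_betw (\<lambda>r. r <#\<^bsub>G\<^esub> H) R {g <#\<^bsub>G\<^esub> H | g. g \<in> carrier G}"
    and "compact Y" and "Y \<subseteq> X" and "invariant H T Y"
    and "\<exists>y\<in>Y. infinite (orbit T H y)"
  shows "(\<Union>r\<in>R. T r ` Y) = X \<and> Y \<subseteq> closure {y\<in>Y. finite (orbit T H y)}"
proof -
  have "G_system G X T" using assms(1) unfolding CAM_def by (elim conjE)
  then interpret CAM_system G X T
    using assms(1) by (intro CAM_system.intro topological_G_system.intro CAM_system_axioms.intro)
  have H: "subgroup H G" using assms(2) by (rule normal_imp_subgroup)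
  have transversal: "{g <#\<^bsub>G\<^esub> H | g. g \<in> carrier G} \<subseteq> (\<lambda>r. r <#\<^bsub>G\<^esub> H) ` R"
    using assms(5) unfolding bij_betw_def by blast
  obtain y where "y \<in> Y" and "infinite (orbit T H y)" using assms(9) by blast
  moreover have "orbit T H y \<subseteq> Y"
    using \<open>y \<in> Y\<close> assms(8) unfolding orbit_def invariant_def by blast
  ultimately have "infinite Y" using infinite_super by blast
  show ?thesis
  proof
    show "(\<Union>r\<in>R. T r ` Y) = X"
      by (rule translates_cover[OF H assms(3,4) transversal assms(6-8) \<open>infinite Y\<close>])
    show "Y \<subseteq> closure {y\<in>Y. finite (orbit T H y)}"
      by (rule subset_closure_finite_orbits[OF H assms(3,4) transversal assms(6-8)])
  qed
qed

end
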